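(* Let $A$ be a nonzero ring and $X$ a simplicial set. The following are equivalent: (i) for every simplex $\sigma\in X$ there exists $\phi\in A^{(X)}$ with $\phi(\sigma)\neq0$; (ii) $X$ is locally finite.
   Context: For a ring $A$, $A^{\Delta^n}=A\otimes\mathbb Z[t_0,\dots,t_n]/(t_0+\dots+t_n-1)$, forming a simplicial ring $A^{\Delta^\bullet}$; $A^X=\hom_{\mathrm{sSet}}(X,A^{\Delta^\bullet})$ with pointwise ring structure. The support of $\phi\in A^X$ is the simplicial subset generated by $\{\sigma\in X:\phi(\sigma)\neq0\}$, and $A^{(X)}$ is the set of $\phi$ with finite support (finitely many nondegenerate simplices). A simplicial set $X$ is locally finite if for every simplex $\sigma$ the set of nondegenerate simplices $\tau$ with $\langle\tau\rangle\supset\langle\sigma\rangle$ is finite, where $\langle\sigma\rangle$ is the simplicial subset generated by $\sigma$. *)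

theory Defs
  imports "HOL-Library.Poly_Mapping"
begin

text \<open>A morphism [m] -> [n] of the simplex category: a monotone map {0..m} -> {0..n}
  (represented by a function nat => nat; only its values on {0..m} matter).\<close>
definition dmap :: "nat \<Rightarrow> nat \<Rightarrow> (nat \<Rightarrow> nat) \<Rightarrow> bool" where
  "dmap m n \<theta> \<longleftrightarrow> (\<forall>i\<le>m. \<theta> i \<le> n) \<and> (\<forall>i j. i \<le> j \<longrightarrow> j \<le> m \<longrightarrow> \<theta> i \<le> \<theta> j)"

text \<open>A simplicial set: sets of n-simplices X n, and for each theta : [m] -> [n]
  the induced map  act n m theta : X n -> X m, functorially (contravariant).\<close>
definition simplicial_set ::
  "(nat \<Rightarrow> 'x set) \<Rightarrow> (nat \<Rightarrow> nat \<Rightarrow> (nat \<Rightarrow> nat) \<Rightarrow> 'x \<Rightarrow> 'x) \<Rightarrow> bool" where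
  "simplicial_set X act \<longleftrightarrow>
     (\<forall>m n \<theta> \<sigma>. dmap m n \<theta> \<longrightarrow> \<sigma> \<in> X n \<longrightarrow> act n m \<theta> \<sigma> \<in> X m) \<and>
     (\<forall>m n \<theta> \<theta>' \<sigma>. (\<forall>i\<le>m. \<theta> i = \<theta>' i) \<longrightarrow> act n m \<theta> \<sigma> = act n m \<theta>' \<sigma>) \<and>
     (\<forall>n \<sigma>. \<sigma> \<in> X n \<longrightarrow> act n n id \<sigma> = \<sigma>) \<and>
     (\<forall>l m n \<theta> \<psi> \<sigma>. dmap m n \<theta> \<longrightarrow> dmap l m \<psi> \<longrightarrow> \<sigma> \<in> X n \<longrightarrow>
        act m l \<psi> (act n m \<theta> \<sigma>) = act n l (\<theta> \<circ> \<psi>) \<sigma>)"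

definition simplices :: "(nat \<Rightarrow> 'x set) \<Rightarrow> (nat \<times> 'x) set" where
  "simplices X = {(n, \<sigma>). \<sigma> \<in> X n}"

definition generated ::
  "(nat \<Rightarrow> nat \<Rightarrow> (nat \<Rightarrow> nat) \<Rightarrow> 'x \<Rightarrow> 'x) \<Rightarrow> (nat \<times> 'x) set \<Rightarrow> (nat \<times> 'x) set" where
  "generated act S = {(m, act n m \<theta> \<tau>) | m n \<theta> \<tau>. (n, \<tau>) \<in> S \<and> dmap m n \<theta>}"

definition nondegenerate ::
  "(nat \<Rightarrow> 'x set) \<Rightarrow> (nat \<Rightarrow> nat \<Rightarrow> (nat \<Rightarrow> nat) \<Rightarrow> 'x \<Rightarrow> 'x) \<Rightarrow> nat \<times> 'x \<Rightarrow> bool" where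
  "nondegenerate X act s \<longleftrightarrow> (case s of (n, \<sigma>) \<Rightarrow>
     \<sigma> \<in> X n \<and> \<not> (\<exists>k \<theta> \<tau>. k < n \<and> dmap n k \<theta> \<and> \<tau> \<in> X k \<and> \<sigma> = act k n \<theta> \<tau>))"

definition locally_finite ::
  "(nat \<Rightarrow> 'x set) \<Rightarrow> (nat \<Rightarrow> nat \<Rightarrow> (nat \<Rightarrow> nat) \<Rightarrow> 'x \<Rightarrow> 'x) \<Rightarrow> bool" where
  "locally_finite X act \<longleftrightarrow> (\<forall>s \<in> simplices X.
     finite {t. nondegenerate X act t \<and> generated act {s} \<subseteq> generated act {t}})"

text \<open>Polynomials over A in the variables t_0, t_1, ... (finitely supported).\<close>
type_synonym 'a pol = "(nat \<Rightarrow>\<^sub>0 nat) \<Rightarrow>\<^sub>0 'a"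

definition var :: "nat \<Rightarrow> 'a::comm_ring_1 pol" where
  "var i = Poly_Mapping.single (Poly_Mapping.single i 1) 1"

definition vars_le :: "nat \<Rightarrow> 'a::comm_ring_1 pol \<Rightarrow> bool" where
  "vars_le n p \<longleftrightarrow> (\<forall>mon::nat \<Rightarrow>\<^sub>0 nat. mon \<in> Poly_Mapping.keys p \<longrightarrow> Poly_Mapping.keys mon \<subseteq> {0..n})"

definition subst :: "(nat \<Rightarrow> 'a::comm_ring_1 pol) \<Rightarrow> 'a pol \<Rightarrow> 'a pol" where
  "subst f p = (\<Sum>mon::nat \<Rightarrow>\<^sub>0 nat \<in> Poly_Mapping.keys p.
                   Poly_Mapping.single 0 (Poly_Mapping.lookup p mon) *
                   (\<Prod>i::nat \<in> Poly_Mapping.keys mon. f i ^ Poly_Mapping.lookup mon i))"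

text \<open>The relation t_0 + ... + t_n - 1 defining A^{Delta^n}.\<close>
definition simplex_rel :: "nat \<Rightarrow> 'a::comm_ring_1 pol" where
  "simplex_rel n = (\<Sum>i\<le>n. var i) - 1"

text \<open>Equality in A^{Delta^n} = A[t_0..t_n]/(t_0+...+t_n-1) of representatives.\<close>
definition eq_Delta :: "nat \<Rightarrow> 'a::comm_ring_1 pol \<Rightarrow> 'a pol \<Rightarrow> bool" where
  "eq_Delta n p q \<longleftrightarrow> (\<exists>r. vars_le n r \<and> p - q = r * simplex_rel n)"

text \<open>The map A^{Delta^n} -> A^{Delta^m} induced by theta : [m] -> [n]:
  t_i |-> sum of t_j over j <= m with theta j = i.\<close>
definition pull :: "nat \<Rightarrow> (nat \<Rightarrow> nat) \<Rightarrow> 'a::comm_ring_1 pol \<Rightarrow> 'a pol" where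
  "pull m \<theta> p = subst (\<lambda>i. \<Sum>j \<in> {j. j \<le> m \<and> \<theta> j = i}. var j) p"

text \<open>A simplicial map phi : X -> A^{Delta^\<bullet>}, given by representatives phi n sigma
  in A[t_0..t_n] of its values in A^{Delta^n}.\<close>
definition sset_map_Delta ::
  "(nat \<Rightarrow> 'x set) \<Rightarrow> (nat \<Rightarrow> nat \<Rightarrow> (nat \<Rightarrow> nat) \<Rightarrow> 'x \<Rightarrow> 'x) \<Rightarrow> (nat \<Rightarrow> 'x \<Rightarrow> 'a::comm_ring_1 pol) \<Rightarrow> bool" where
  "sset_map_Delta X act \<phi> \<longleftrightarrow>
     (\<forall>n \<sigma>. \<sigma> \<in> X n \<longrightarrow> vars_le n (\<phi> n \<sigma>)) \<and>
     (\<forall>m n \<theta> \<sigma>. dmap m n \<theta> \<longrightarrow> \<sigma> \<in> X n \<longrightarrow>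
        eq_Delta m (\<phi> m (act n m \<theta> \<sigma>)) (pull m \<theta> (\<phi> n \<sigma>)))"

definition support ::
  "(nat \<Rightarrow> 'x set) \<Rightarrow> (nat \<Rightarrow> nat \<Rightarrow> (nat \<Rightarrow> nat) \<Rightarrow> 'x \<Rightarrow> 'x) \<Rightarrow> (nat \<Rightarrow> 'x \<Rightarrow> 'a::comm_ring_1 pol) \<Rightarrow> (nat \<times> 'x) set" where
  "support X act \<phi> = generated act {(n, \<sigma>). \<sigma> \<in> X n \<and> \<not> eq_Delta n (\<phi> n \<sigma>) 0}"

text \<open>Elements of A^{(X)}: simplicial maps with finite support (finitely many
  nondegenerate simplices).\<close>
definition fin_supp_cochain ::
  "(nat \<Rightarrow> 'x set) \<Rightarrow> (nat \<Rightarrow> nat \<Rightarrow> (nat \<Rightarrow> nat) \<Rightarrow> 'x \<Rightarrow> 'x) \<Rightarrow> (nat \<Rightarrow> 'x \<Rightarrow> 'a::comm_ring_1 pol) \<Rightarrow> bool" where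
  "fin_supp_cochain X act \<phi> \<longleftrightarrow> sset_map_Delta X act \<phi> \<and>
     finite {s \<in> support X act \<phi>. nondegenerate X act s}"

end

theory Submission imports Defs begin

(* Proof idea.
   (i) \<Longrightarrow> (ii): the values of a cochain \<phi> : X \<rightarrow> A^\<Delta> propagate upwards: if \<sigma> is a face
   of \<tau> (i.e. \<sigma> = \<theta>^* \<tau>) and \<phi>(\<sigma>) \<noteq> 0, then \<phi>(\<tau>) \<noteq> 0, because pulling back along
   \<theta> maps the ideal (t_0 + ... + t_k - 1) into (t_0 + ... + t_n - 1).  Hence every
   nondegenerate \<tau> with \<langle>\<sigma>\<rangle> \<subseteq> \<langle>\<tau>\<rangle> lies in the support of a finitely supported \<phi> with
   \<phi>(\<sigma>) \<noteq> 0, and there are only finitely many of them.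
   (ii) \<Longrightarrow> (i): for a vertex v of \<sigma> take the "barycentric coordinate of v", the
   cochain sending \<tau> \<in> X_m to the sum of those t_j for which the j-th vertex of \<tau> is v.
   It is compatible with the simplicial structure, it is nonzero at \<sigma> (evaluate at the
   j-th corner of the simplex), and every simplex of its support is a face of one of
   the finitely many nondegenerate simplices containing v (Eilenberg-Zilber), so its
   support is finite. *)

section \<open>Substitution of polynomials is a ring homomorphism\<close>

definition Mon :: "(nat \<Rightarrow> 'a::comm_ring_1 pol) \<Rightarrow> (nat \<Rightarrow>\<^sub>0 nat) \<Rightarrow> 'a pol" where
  "Mon f mon = (\<Prod>i \<in> Poly_Mapping.keys mon. f i ^ Poly_Mapping.lookup mon i)"

abbreviation C :: "'a::comm_ring_1 \<Rightarrow> 'a pol" where "C c \<equiv> Poly_Mapping.single 0 c"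

lemma Mon_superset:
  assumes "finite S" "Poly_Mapping.keys mon \<subseteq> S"
  shows "Mon f mon = (\<Prod>i \<in> S. f i ^ Poly_Mapping.lookup mon i)"
  unfolding Mon_def
  by (rule prod.mono_neutral_left) (use assms in \<open>auto simp: in_keys_iff\<close>)

lemma Mon_add: "Mon f (a + b) = Mon f a * Mon f b"
proof -
  let ?S = "Poly_Mapping.keys a \<union> Poly_Mapping.keys b"
  have "Mon f (a + b) = (\<Prod>i \<in> ?S. f i ^ Poly_Mapping.lookup (a + b) i)"
    by (rule Mon_superset) (auto dest: keys_add[THEN subsetD])
  also have "\<dots> = (\<Prod>i \<in> ?S. f i ^ Poly_Mapping.lookup a i) * (\<Prod>i \<in> ?S. f i ^ Poly_Mapping.lookup b i)"
    by (simp add: lookup_add power_add prod.distrib)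
  also have "\<dots> = Mon f a * Mon f b"
    by (simp add: Mon_superset[symmetric])
  finally show ?thesis .
qed

lemma subst_Mon: "subst f p = (\<Sum>mon \<in> Poly_Mapping.keys p. C (Poly_Mapping.lookup p mon) * Mon f mon)"
  by (simp add: subst_def Mon_def)

lemma subst_superset:
  assumes "finite S" "Poly_Mapping.keys p \<subseteq> S"
  shows "subst f p = (\<Sum>mon \<in> S. C (Poly_Mapping.lookup p mon) * Mon f mon)"
  unfolding subst_Mon
  by (rule sum.mono_neutral_left) (use assms in \<open>auto simp: in_keys_iff\<close>)

lemma subst_add: "subst f (p + q) = subst f p + subst f q"
proof -
  let ?S = "Poly_Mapping.keys p \<union> Poly_Mapping.keys q"
  have "subst f (p + q) = (\<Sum>mon \<in> ?S. C (Poly_Mapping.lookup (p + q) mon) * Mon f mon)"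
    by (rule subst_superset) (auto dest: keys_add[THEN subsetD])
  also have "\<dots> = (\<Sum>mon \<in> ?S. C (Poly_Mapping.lookup p mon) * Mon f mon)
                 + (\<Sum>mon \<in> ?S. C (Poly_Mapping.lookup q mon) * Mon f mon)"
    by (simp add: lookup_add single_add distrib_right sum.distrib)
  also have "\<dots> = subst f p + subst f q"
    by (simp add: subst_superset[symmetric])
  finally show ?thesis .
qed

lemma subst_zero [simp]: "subst f 0 = 0"
  by (simp add: subst_def)

lemma subst_diff: "subst f (p - q) = subst f p - subst f q"
  using subst_add[of f "p - q" q] by (simp add: eq_diff_eq)

lemma subst_sum: "subst f (sum g A) = (\<Sum>a\<in>A. subst f (g a))"
  by (induction A rule: infinite_finite_induct) (auto simp: subst_add)

lemma subst_single: "subst f (Poly_Mapping.single a c) = C c * Mon f a"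
  by (subst subst_superset[of "{a}"]) auto

lemma poly_mapping_sum_terms:
  "p = (\<Sum>a \<in> Poly_Mapping.keys p. Poly_Mapping.single a (Poly_Mapping.lookup p a))"
  by (rule poly_mapping_eqI) (auto simp: lookup_sum lookup_single when_def in_keys_iff)

lemma subst_mult: "subst f (p * q) = subst f p * subst f q"
proof -
  have "p * q = (\<Sum>a \<in> Poly_Mapping.keys p. \<Sum>b \<in> Poly_Mapping.keys q.
           Poly_Mapping.single a (Poly_Mapping.lookup p a) * Poly_Mapping.single b (Poly_Mapping.lookup q b))"
    by (subst (1) poly_mapping_sum_terms, subst (2) poly_mapping_sum_terms) (simp add: sum_product)
  hence "subst f (p * q) = (\<Sum>a \<in> Poly_Mapping.keys p. \<Sum>b \<in> Poly_Mapping.keys q.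
           (C (Poly_Mapping.lookup p a) * Mon f a) * (C (Poly_Mapping.lookup q b) * Mon f b))"
    by (simp add: subst_sum mult_single subst_single Mon_add mult_ac)
  also have "\<dots> = subst f p * subst f q"
    by (simp add: subst_Mon sum_product)
  finally show ?thesis .
qed

lemma subst_one [simp]: "subst f 1 = 1"
  using subst_single[of f 0 1] by (simp add: Mon_def)

lemma subst_var [simp]: "subst f (var i) = f i"
  by (simp add: var_def subst_single Mon_def)

lemma vars_le_zero [simp]: "vars_le n 0"
  by (simp add: vars_le_def)

lemma vars_le_one [simp]: "vars_le n 1"
  by (simp add: vars_le_def)

lemma vars_le_C [simp]: "vars_le n (C c)"
  by (simp add: vars_le_def)

lemma vars_le_var: "i \<le> n \<Longrightarrow> vars_le n (var i)"
  by (simp add: vars_le_def var_def)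

lemma vars_le_add: "vars_le n p \<Longrightarrow> vars_le n q \<Longrightarrow> vars_le n (p + q)"
  unfolding vars_le_def by (meson Un_iff keys_add subsetD)

lemma vars_le_mult:
  assumes p: "vars_le n p" and q: "vars_le n q"
  shows "vars_le n (p * q)"
  unfolding vars_le_def
proof (intro allI impI)
  fix mon :: "nat \<Rightarrow>\<^sub>0 nat"
  assume "mon \<in> Poly_Mapping.keys (p * q)"
  then obtain a b where "mon = a + b" "a \<in> Poly_Mapping.keys p" "b \<in> Poly_Mapping.keys q"
    using keys_mult by blast
  thus "Poly_Mapping.keys mon \<subseteq> {0..n}"
    using p q keys_add[of a b] unfolding vars_le_def by (meson Un_least order_trans)
qed

lemma vars_le_sum: "(\<And>a. a \<in> A \<Longrightarrow> vars_le n (g a)) \<Longrightarrow> vars_le n (sum g A)"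
  by (induction A rule: infinite_finite_induct) (auto intro: vars_le_add)

lemma vars_le_prod: "(\<And>a. a \<in> A \<Longrightarrow> vars_le n (g a)) \<Longrightarrow> vars_le n (prod g A)"
  by (induction A rule: infinite_finite_induct) (auto intro: vars_le_mult)

lemma vars_le_power: "vars_le n p \<Longrightarrow> vars_le n (p ^ k)"
  by (induction k) (auto intro: vars_le_mult)

lemma vars_le_subst: "(\<And>i. vars_le n (f i)) \<Longrightarrow> vars_le n (subst f p)"
  unfolding subst_def
  by (intro vars_le_sum vars_le_mult vars_le_prod vars_le_power) auto

section \<open>The rings A^{Delta^n} and their structure maps\<close>

lemma eq_Delta_refl: "eq_Delta n p p"
  unfolding eq_Delta_def by (rule exI[of _ 0]) simp

lemma eq_Delta_trans_zero:
  assumes "eq_Delta n a b" "eq_Delta n b (0::'a::comm_ring_1 pol)"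
  shows "eq_Delta n a 0"
proof -
  obtain r1 r2 where "vars_le n r1" "a - b = r1 * simplex_rel n" "vars_le n r2" "b = r2 * simplex_rel n"
    using assms by (auto simp: eq_Delta_def)
  hence "vars_le n (r1 + r2)" "a - 0 = (r1 + r2) * simplex_rel n"
    by (auto intro: vars_le_add simp: algebra_simps eq_diff_eq)
  thus ?thesis unfolding eq_Delta_def by blast
qed

lemma eq_Delta_zero_eval:
  assumes "eq_Delta n p 0" "subst e (simplex_rel n) = 0"
  shows "subst e p = 0"
  using assms by (auto simp: eq_Delta_def subst_mult)

lemma dmap_id: "dmap n n id"
  by (simp add: dmap_def)

lemma dmap_comp: "dmap m n \<theta> \<Longrightarrow> dmap l m \<psi> \<Longrightarrow> dmap l n (\<theta> \<circ> \<psi>)"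
  unfolding dmap_def by auto

lemma dmap_const: "j \<le> n \<Longrightarrow> dmap m n (\<lambda>_. j)"
  by (simp add: dmap_def)

lemma pull_eq_subst: "pull m \<theta> = subst (\<lambda>i. \<Sum>j \<in> {j. j \<le> m \<and> \<theta> j = i}. var j)"
  by (simp add: pull_def fun_eq_iff)

lemma vars_le_pull: "vars_le m (pull m \<theta> p)"
  unfolding pull_eq_subst by (intro vars_le_subst vars_le_sum vars_le_var) auto

lemma pull_sum_var:
  assumes "dmap m k \<theta>" "S \<subseteq> {..k}"
  shows "pull m \<theta> (\<Sum>i\<in>S. var i) = (\<Sum>j \<in> {j. j \<le> m \<and> \<theta> j \<in> S}. (var j :: 'a::comm_ring_1 pol))"
proof -
  have "pull m \<theta> (\<Sum>i\<in>S. var i) = (\<Sum>i\<in>S. \<Sum>j \<in> {x. x \<in> {j. j \<le> m \<and> \<theta> j \<in> S} \<and> \<theta> x = i}. (var j :: 'a pol))"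
    by (simp add: pull_eq_subst subst_sum) (intro sum.cong; auto)
  also have "\<dots> = (\<Sum>j \<in> {j. j \<le> m \<and> \<theta> j \<in> S}. var j)"
    by (rule sum.group) (use assms in \<open>auto simp: dmap_def intro: finite_subset\<close>)
  finally show ?thesis .
qed

lemma pull_simplex_rel:
  assumes "dmap m k \<theta>"
  shows "pull m \<theta> (simplex_rel k) = (simplex_rel m :: 'a::comm_ring_1 pol)"
proof -
  have "{j. j \<le> m \<and> \<theta> j \<in> {..k}} = {..m}"
    using assms by (auto simp: dmap_def)
  thus ?thesis
    using pull_sum_var[OF assms, of "{..k}", where 'a = 'a]
    by (simp add: simplex_rel_def pull_eq_subst subst_diff atMost_def)
qed

lemma eq_Delta_pull_zero:
  assumes "dmap n k \<theta>" "eq_Delta k p (0::'a::comm_ring_1 pol)"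
  shows "eq_Delta n (pull n \<theta> p) 0"
proof -
  obtain r where r: "p = r * simplex_rel k"
    using assms(2) by (auto simp: eq_Delta_def)
  hence "pull n \<theta> p = pull n \<theta> r * simplex_rel n"
    using pull_simplex_rel[OF assms(1), where 'a = 'a] by (simp add: pull_eq_subst subst_mult)
  thus ?thesis
    unfolding eq_Delta_def using vars_le_pull by auto
qed

locale simplicial =
  fixes X :: "nat \<Rightarrow> 'x set"
    and act :: "nat \<Rightarrow> nat \<Rightarrow> (nat \<Rightarrow> nat) \<Rightarrow> 'x \<Rightarrow> 'x"
  assumes simplicial_set: "simplicial_set X act"
begin

lemma act_in: "dmap m n \<theta> \<Longrightarrow> \<sigma> \<in> X n \<Longrightarrow> act n m \<theta> \<sigma> \<in> X m"
  using simplicial_set unfolding simplicial_set_def by blast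

lemma act_cong: "(\<And>i. i \<le> m \<Longrightarrow> \<theta> i = \<theta>' i) \<Longrightarrow> act n m \<theta> \<sigma> = act n m \<theta>' \<sigma>"
  using simplicial_set unfolding simplicial_set_def by blast

lemma act_id: "\<sigma> \<in> X n \<Longrightarrow> act n n id \<sigma> = \<sigma>"
  using simplicial_set unfolding simplicial_set_def by blast

lemma act_comp:
  "dmap m n \<theta> \<Longrightarrow> dmap l m \<psi> \<Longrightarrow> \<sigma> \<in> X n \<Longrightarrow> act m l \<psi> (act n m \<theta> \<sigma>) = act n l (\<theta> \<circ> \<psi>) \<sigma>"
  using simplicial_set unfolding simplicial_set_def by blast

lemma nondegenerate_in: "nondegenerate X act (k, \<tau>) \<Longrightarrow> \<tau> \<in> X k"
  by (simp add: nondegenerate_def)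

lemma generated_singleton:
  "(m, x) \<in> generated act {(k, \<tau>)} \<longleftrightarrow> (\<exists>\<theta>. dmap m k \<theta> \<and> x = act k m \<theta> \<tau>)"
  by (auto simp: generated_def)

lemma generated_self: "\<sigma> \<in> X n \<Longrightarrow> (n, \<sigma>) \<in> generated act {(n, \<sigma>)}"
  using dmap_id act_id by (force simp: generated_singleton)

lemma generated_subset_iff:
  assumes "\<sigma> \<in> X n" "\<tau> \<in> X k"
  shows "generated act {(n, \<sigma>)} \<subseteq> generated act {(k, \<tau>)} \<longleftrightarrow> (n, \<sigma>) \<in> generated act {(k, \<tau>)}"
proof
  assume "(n, \<sigma>) \<in> generated act {(k, \<tau>)}"
  then obtain \<theta> where \<theta>: "dmap n k \<theta>" "\<sigma> = act k n \<theta> \<tau>"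
    by (auto simp: generated_singleton)
  show "generated act {(n, \<sigma>)} \<subseteq> generated act {(k, \<tau>)}"
  proof (clarify)
    fix m x assume "(m, x) \<in> generated act {(n, \<sigma>)}"
    then obtain \<psi> where "dmap m n \<psi>" "x = act n m \<psi> \<sigma>"
      by (auto simp: generated_singleton)
    with \<theta> assms(2) show "(m, x) \<in> generated act {(k, \<tau>)}"
      by (auto simp: generated_singleton act_comp intro: dmap_comp)
  qed
qed (use generated_self[OF assms(1)] in blast)

lemma degeneracy_of_nondegenerate:
  "\<sigma> \<in> X n \<Longrightarrow> \<exists>k \<psi> \<tau>. dmap n k \<psi> \<and> nondegenerate X act (k, \<tau>) \<and> \<sigma> = act k n \<psi> \<tau>"
proof (induction n arbitrary: \<sigma> rule: less_induct)
  case (less n)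
  show ?case
  proof (cases "nondegenerate X act (n, \<sigma>)")
    case True
    then show ?thesis using dmap_id act_id less.prems by metis
  next
    case False
    then obtain k \<theta> \<tau> where k: "k < n" "dmap n k \<theta>" "\<tau> \<in> X k" "\<sigma> = act k n \<theta> \<tau>"
      using less.prems by (auto simp: nondegenerate_def)
    then obtain k' \<psi> \<tau>' where k': "dmap k k' \<psi>" "nondegenerate X act (k', \<tau>')" "\<tau> = act k' k \<psi> \<tau>'"
      using less.IH by blast
    hence "\<sigma> = act k' n (\<psi> \<circ> \<theta>) \<tau>'"
      using k act_comp nondegenerate_in by metis
    thus ?thesis using k' k dmap_comp by blast
  qed
qed

lemma nondegenerate_face_dim:
  assumes "nondegenerate X act (m, act k m \<theta> \<tau>)" "dmap m k \<theta>" "\<tau> \<in> X k"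
  shows "m \<le> k"
proof (rule ccontr)
  assume "\<not> m \<le> k"
  hence "k < m" by simp
  with assms show False
    unfolding nondegenerate_def by blast
qed

text \<open>A simplex has only finitely many faces of dimension at most its own, since a
  structure map [m] \<rightarrow> [k] only matters on {0..m}.\<close>
lemma finite_low_faces:
  assumes "finite F"
  shows "finite {(m, act k m \<theta> \<tau>) | m k \<theta> \<tau>. (k, \<tau>) \<in> F \<and> m \<le> k \<and> dmap m k \<theta>}"
proof -
  define Fun where "Fun m k = {\<chi>::nat \<Rightarrow> nat. \<forall>x. (x \<in> {..m} \<longrightarrow> \<chi> x \<in> {..k}) \<and> (x \<notin> {..m} \<longrightarrow> \<chi> x = 0)}"
    for m k
  have "finite (Fun m k)" for m k
    unfolding Fun_def by (rule finite_set_of_finite_funs) auto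
  hence "finite (\<Union>(k, \<tau>) \<in> F. \<Union>m \<in> {..k}. (\<lambda>\<chi>. (m, act k m \<chi> \<tau>)) ` Fun m k)"
    using assms by auto
  moreover have "{(m, act k m \<theta> \<tau>) | m k \<theta> \<tau>. (k, \<tau>) \<in> F \<and> m \<le> k \<and> dmap m k \<theta>}
      \<subseteq> (\<Union>(k, \<tau>) \<in> F. \<Union>m \<in> {..k}. (\<lambda>\<chi>. (m, act k m \<chi> \<tau>)) ` Fun m k)"
  proof clarify
    fix m k \<theta> \<tau> assume "(k, \<tau>) \<in> F" "m \<le> k" "dmap m k \<theta>"
    moreover define \<chi> where "\<chi> i = (if i \<le> m then \<theta> i else 0)" for i
    ultimately have "\<chi> \<in> Fun m k" "act k m \<theta> \<tau> = act k m \<chi> \<tau>"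
      by (auto simp: Fun_def dmap_def intro: act_cong)
    with \<open>(k, \<tau>) \<in> F\<close> \<open>m \<le> k\<close> show "(m, act k m \<theta> \<tau>) \<in> (\<Union>(k, \<tau>) \<in> F. \<Union>m \<in> {..k}. (\<lambda>\<chi>. (m, act k m \<chi> \<tau>)) ` Fun m k)"
      by blast
  qed
  ultimately show ?thesis
    by (rule finite_subset[rotated])
qed

section \<open>Finitely supported cochains force local finiteness\<close>

lemma nonzero_on_coface:
  assumes "sset_map_Delta X act \<phi>" "dmap n k \<theta>" "\<tau> \<in> X k"
    and "\<not> eq_Delta n (\<phi> n (act k n \<theta> \<tau>)) (0::'a::comm_ring_1 pol)"
  shows "\<not> eq_Delta k (\<phi> k \<tau>) 0"
proof
  assume "eq_Delta k (\<phi> k \<tau>) 0"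
  hence "eq_Delta n (pull n \<theta> (\<phi> k \<tau>)) 0"
    using eq_Delta_pull_zero assms(2) by blast
  moreover have "eq_Delta n (\<phi> n (act k n \<theta> \<tau>)) (pull n \<theta> (\<phi> k \<tau>))"
    using assms(1-3) unfolding sset_map_Delta_def by blast
  ultimately show False
    using assms(4) eq_Delta_trans_zero by blast
qed

lemma nonzero_in_support:
  assumes "\<tau> \<in> X k" "\<not> eq_Delta k (\<phi> k \<tau>) (0::'a::comm_ring_1 pol)"
  shows "(k, \<tau>) \<in> support X act \<phi>"
proof -
  have "(k, act k k id \<tau>) \<in> support X act \<phi>"
    using assms dmap_id unfolding support_def generated_def by blast
  with act_id[OF assms(1)] show ?thesis by simp
qed

text \<open>(i) \<Longrightarrow> (ii): a cochain not vanishing at \<sigma> has every nondegenerate simplex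
  containing \<sigma> in its support.\<close>
lemma locally_finite_if_cochains:
  assumes H: "\<And>n \<sigma>. \<sigma> \<in> X n \<Longrightarrow>
      \<exists>\<phi> :: nat \<Rightarrow> 'x \<Rightarrow> 'a::comm_ring_1 pol. fin_supp_cochain X act \<phi> \<and> \<not> eq_Delta n (\<phi> n \<sigma>) 0"
  shows "locally_finite X act"
  unfolding locally_finite_def
proof
  fix s assume "s \<in> simplices X"
  then obtain n \<sigma> where s: "s = (n, \<sigma>)" "\<sigma> \<in> X n"
    by (auto simp: simplices_def)
  obtain \<phi> :: "nat \<Rightarrow> 'x \<Rightarrow> 'a pol" where \<phi>: "fin_supp_cochain X act \<phi>" "\<not> eq_Delta n (\<phi> n \<sigma>) 0"
    using H s by blast
  have "{t. nondegenerate X act t \<and> generated act {s} \<subseteq> generated act {t}}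
        \<subseteq> {t \<in> support X act \<phi>. nondegenerate X act t}"
  proof clarify
    fix k \<tau> assume nd: "nondegenerate X act (k, \<tau>)"
      and sub: "generated act {s} \<subseteq> generated act {(k, \<tau>)}"
    have \<tau>: "\<tau> \<in> X k" using nd by (rule nondegenerate_in)
    then obtain \<theta> where "dmap n k \<theta>" "\<sigma> = act k n \<theta> \<tau>"
      using sub s generated_subset_iff generated_singleton by metis
    hence "\<not> eq_Delta k (\<phi> k \<tau>) 0"
      using nonzero_on_coface[of \<phi> n k \<theta> \<tau>] \<phi> \<tau> by (simp add: fin_supp_cochain_def)
    thus "(k, \<tau>) \<in> support X act \<phi>"
      using nonzero_in_support \<tau> by blast
  qed
  moreover have "finite {t \<in> support X act \<phi>. nondegenerate X act t}"
    using \<phi>(1) by (simp add: fin_supp_cochain_def)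
  ultimately show "finite {t. nondegenerate X act t \<and> generated act {s} \<subseteq> generated act {t}}"
    using finite_subset by blast
qed

section \<open>Barycentric coordinates of a vertex\<close>

definition vertex :: "nat \<Rightarrow> nat \<Rightarrow> 'x \<Rightarrow> 'x" where
  "vertex m j \<tau> = act m 0 (\<lambda>_. j) \<tau>"

definition star_coord :: "'x \<Rightarrow> nat \<Rightarrow> 'x \<Rightarrow> 'a::comm_ring_1 pol" where
  "star_coord v m \<tau> = (\<Sum>j \<in> {j. j \<le> m \<and> vertex m j \<tau> = v}. var j)"

lemma vertex_act:
  assumes "dmap m n \<theta>" "\<tau> \<in> X n" "j \<le> m"
  shows "vertex m j (act n m \<theta> \<tau>) = vertex n (\<theta> j) \<tau>"
  using act_comp[OF assms(1) dmap_const[OF assms(3)] assms(2)]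
  by (simp add: vertex_def comp_def)

lemma vertex_in_generated:
  "j \<le> k \<Longrightarrow> (0, vertex k j \<tau>) \<in> generated act {(k, \<tau>)}"
  by (auto simp: generated_singleton vertex_def intro: dmap_const)

text \<open>The barycentric coordinate is a simplicial map X \<rightarrow> A^{Delta^\<bullet>}; on representatives
  the compatibility even holds on the nose.\<close>
lemma star_coord_sset_map: "sset_map_Delta X act (star_coord v :: nat \<Rightarrow> 'x \<Rightarrow> 'a::comm_ring_1 pol)"
  unfolding sset_map_Delta_def
proof safe
  fix m \<tau> show "vars_le m (star_coord v m \<tau> :: 'a pol)"
    unfolding star_coord_def by (intro vars_le_sum vars_le_var) auto
next
  fix m n \<theta> \<tau> assume \<theta>: "dmap m n \<theta>" and \<tau>: "\<tau> \<in> X n"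
  have "pull m \<theta> (star_coord v n \<tau>) = (\<Sum>j \<in> {j. j \<le> m \<and> \<theta> j \<in> {i. i \<le> n \<and> vertex n i \<tau> = v}}. (var j :: 'a pol))"
    unfolding star_coord_def by (rule pull_sum_var[OF \<theta>]) auto
  also have "\<dots> = star_coord v m (act n m \<theta> \<tau>)"
    unfolding star_coord_def using \<theta> \<tau> by (intro sum.cong) (auto simp: vertex_act dmap_def)
  finally show "eq_Delta m (star_coord v m (act n m \<theta> \<tau>) :: 'a pol) (pull m \<theta> (star_coord v n \<tau>))"
    using eq_Delta_refl by metis
qed

text \<open>At the j-th corner of the simplex the coordinate of the j-th vertex equals 1.\<close>
lemma star_coord_nonzero:
  assumes "(0::'a::comm_ring_1) \<noteq> 1" "j \<le> n"
  shows "\<not> eq_Delta n (star_coord (vertex n j \<sigma>) n \<sigma> :: 'a pol) 0"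
proof
  assume zero: "eq_Delta n (star_coord (vertex n j \<sigma>) n \<sigma> :: 'a pol) 0"
  define e :: "nat \<Rightarrow> 'a pol" where "e i = (if i = j then 1 else 0)" for i
  have "subst e (simplex_rel n) = 0"
    using assms(2) by (simp add: simplex_rel_def subst_diff subst_sum e_def)
  hence "subst e (star_coord (vertex n j \<sigma>) n \<sigma>) = 0"
    using zero eq_Delta_zero_eval by blast
  moreover have "subst e (star_coord (vertex n j \<sigma>) n \<sigma>) = 1"
    using assms(2) by (simp add: star_coord_def subst_sum e_def sum.delta)
  ultimately have "Poly_Mapping.lookup (1::'a pol) 0 = Poly_Mapping.lookup 0 0"
    by simp
  thus False using assms(1) by simp
qed

lemma star_coord_support_vertex:
  assumes "\<not> eq_Delta n (star_coord v n \<sigma> :: 'a::comm_ring_1 pol) 0"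
  shows "\<exists>j\<le>n. vertex n j \<sigma> = v"
proof (rule ccontr)
  assume "\<not> ?thesis"
  hence "{j. j \<le> n \<and> vertex n j \<sigma> = v} = {}" by blast
  hence "star_coord v n \<sigma> = (0::'a pol)"
    unfolding star_coord_def by (metis sum.empty)
  with assms eq_Delta_refl show False by metis
qed

lemma star_coord_support:
  assumes "(m, s) \<in> support X act (star_coord v :: nat \<Rightarrow> 'x \<Rightarrow> 'a::comm_ring_1 pol)"
    and "nondegenerate X act (m, s)"
  shows "\<exists>k \<tau> \<theta>. nondegenerate X act (k, \<tau>) \<and> (0, v) \<in> generated act {(k, \<tau>)} \<and>
           m \<le> k \<and> dmap m k \<theta> \<and> s = act k m \<theta> \<tau>"
proof -
  obtain n \<theta> \<sigma> where \<sigma>: "\<sigma> \<in> X n" "dmap m n \<theta>" "s = act n m \<theta> \<sigma>"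
    and nz: "\<not> eq_Delta n (star_coord v n \<sigma> :: 'a pol) 0"
    using assms(1) unfolding support_def generated_def by auto
  obtain j where j: "j \<le> n" "vertex n j \<sigma> = v"
    using star_coord_support_vertex[OF nz] by blast
  obtain k \<psi> \<tau> where \<psi>: "dmap n k \<psi>" "nondegenerate X act (k, \<tau>)" "\<sigma> = act k n \<psi> \<tau>"
    using degeneracy_of_nondegenerate[OF \<sigma>(1)] by blast
  have \<tau>: "\<tau> \<in> X k" using \<psi>(2) by (rule nondegenerate_in)
  have "v = vertex k (\<psi> j) \<tau>"
    using j \<psi> \<tau> vertex_act by metis
  moreover have "\<psi> j \<le> k" using \<psi>(1) j(1) by (simp add: dmap_def)
  ultimately have "(0, v) \<in> generated act {(k, \<tau>)}"
    using vertex_in_generated by blast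
  moreover have face: "s = act k m (\<psi> \<circ> \<theta>) \<tau>" "dmap m k (\<psi> \<circ> \<theta>)"
    using \<sigma> \<psi> \<tau> act_comp dmap_comp by auto
  moreover have "m \<le> k"
    using nondegenerate_face_dim assms(2) face \<tau> by metis
  ultimately show ?thesis using \<psi>(2) by blast
qed

lemma star_coord_fin_supp:
  assumes "locally_finite X act" "v \<in> X 0"
  shows "fin_supp_cochain X act (star_coord v :: nat \<Rightarrow> 'x \<Rightarrow> 'a::comm_ring_1 pol)"
proof -
  define F where "F = {t. nondegenerate X act t \<and> generated act {(0, v)} \<subseteq> generated act {t}}"
  have "finite F"
    using assms unfolding F_def locally_finite_def simplices_def by blast
  have "{s \<in> support X act (star_coord v :: nat \<Rightarrow> 'x \<Rightarrow> 'a pol). nondegenerate X act s}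
        \<subseteq> {(m, act k m \<theta> \<tau>) | m k \<theta> \<tau>. (k, \<tau>) \<in> F \<and> m \<le> k \<and> dmap m k \<theta>}"
  proof clarify
    fix m s assume "(m, s) \<in> support X act (star_coord v :: nat \<Rightarrow> 'x \<Rightarrow> 'a pol)"
      "nondegenerate X act (m, s)"
    then obtain k \<tau> \<theta> where "nondegenerate X act (k, \<tau>)" "(0, v) \<in> generated act {(k, \<tau>)}"
        "m \<le> k" "dmap m k \<theta>" "s = act k m \<theta> \<tau>"
      using star_coord_support by blast
    moreover from calculation have "(k, \<tau>) \<in> F"
      using generated_subset_iff[OF assms(2) nondegenerate_in] unfolding F_def by blast
    ultimately show "\<exists>m' k \<theta> \<tau>. (m, s) = (m', act k m' \<theta> \<tau>) \<and> (k, \<tau>) \<in> F \<and> m' \<le> k \<and> dmap m' k \<theta>"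
      by blast
  qed
  hence "finite {s \<in> support X act (star_coord v :: nat \<Rightarrow> 'x \<Rightarrow> 'a pol). nondegenerate X act s}"
    using finite_low_faces[OF \<open>finite F\<close>] finite_subset by blast
  thus ?thesis
    using star_coord_sset_map unfolding fin_supp_cochain_def by blast
qed

end

theorem proposition9p6:
  fixes X :: "nat \<Rightarrow> 'x set"
    and act :: "nat \<Rightarrow> nat \<Rightarrow> (nat \<Rightarrow> nat) \<Rightarrow> 'x \<Rightarrow> 'x"
  assumes "simplicial_set X act"
    and "(0::'a::comm_ring_1) \<noteq> 1"
  shows "(\<forall>n \<sigma>. \<sigma> \<in> X n \<longrightarrow>
            (\<exists>\<phi> :: nat \<Rightarrow> 'x \<Rightarrow> 'a pol.
               fin_supp_cochain X act \<phi> \<and> \<not> eq_Delta n (\<phi> n \<sigma>) 0))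
         \<longleftrightarrow> locally_finite X act"
proof -
  interpret simplicial X act by (rule simplicial.intro) (rule assms(1))
  have "\<exists>\<phi> :: nat \<Rightarrow> 'x \<Rightarrow> 'a pol. fin_supp_cochain X act \<phi> \<and> \<not> eq_Delta n (\<phi> n \<sigma>) 0"
    if "locally_finite X act" "\<sigma> \<in> X n" for n \<sigma>
  proof -
    have "vertex n 0 \<sigma> \<in> X 0"
      unfolding vertex_def using that(2) by (intro act_in dmap_const) auto
    thus ?thesis
      using star_coord_fin_supp[OF that(1)] star_coord_nonzero[OF assms(2), of 0 n \<sigma>] by blast
  qed
  thus ?thesis
    using locally_finite_if_cochains[where 'a = 'a] by blast
qed

end
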